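(* Let $\lambda_n$ denote the largest eigenvalue of the real symmetric $n\times n$ matrix $\mathcal A_n$ defined below. There exists $n_0$ such that for all integers $n\ge n_0$, $$4-\frac{40}{n}<\lambda_n<4-\frac{2}{n}.$$
   Context: For an integer $n\ge 3$, $\mathcal A_n=(a_{jk})_{j,k=0}^{n-1}$ is the $n\times n$ real matrix with diagonal entries $a_{jj}=2\cos\frac{2\pi j}{n}$, with $a_{j,j+1}=a_{j+1,j}=1$ for $0\le j\le n-2$, with $a_{0,n-1}=a_{n-1,0}=1$, and all other entries $0$. (It is the matrix of $x+x^{-1}+y+y^{-1}$ in the representation $T_1$ of the finite Heisenberg group $H_n$.) *)

theory Defs
  imports Complex_Main "Jordan_Normal_Form.Matrix" "Jordan_Normal_Form.Char_Poly"
begin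

definition heis_mat :: "nat \<Rightarrow> real mat" where
  "heis_mat n = mat n n (\<lambda>(j, k).
     if j = k then 2 * cos (2 * pi * real j / real n)
     else if j + 1 = k \<or> k + 1 = j \<or> (j = 0 \<and> k = n - 1) \<or> (j = n - 1 \<and> k = 0) then 1
     else 0)"

definition largest_eigenvalue :: "real mat \<Rightarrow> real" where
  "largest_eigenvalue A = Max {k. eigenvalue A k}"

end

(*
  Write Q(x) for the quadratic form of A_n on x : Z/n -> R. Expanding,
    Q(x) = 4 |x|^2 - sum_j (2 - 2 cos (2 pi j / n)) x_j^2 - sum_j (x_j - x_(j+1))^2,
  and since A_n is real symmetric, its largest eigenvalue is the maximum of Q(x) / |x|^2
  (attained on the compact unit sphere, where every maximizer is an eigenvector).

  Lower bound: the tent x_j = max (0, L - dist (j, 0)) with L = floor (sqrt n) has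
  |x|^2 >= L^3/3, cycle energy <= 4 L and potential <= 8 L^5 / n^2, so Q(x) / |x|^2 > 4 - 40/n.

  Upper bound: with g_j = sin ((2j+1) pi / n), summation by parts gives
    sum_j g_j (x_j^2 - x_(j+1)^2) = sin (pi/n) (2 |x|^2 - potential),
  while g (a^2 - b^2) <= g^2 (a^2 + b^2) / 2 + (a - b)^2 bounds the same sum by
  potential + sin (pi/n)^2 |x|^2 + energy. As sin (pi/n) is about pi/n, this forces
  potential + energy > (2/n) |x|^2.
*)
theory Submission
  imports Defs "HOL-Analysis.Function_Topology" "HOL-Library.Discrete_Functions"
    "Jordan_Normal_Form.Spectral_Radius"
begin

section \<open>Rayleigh quotients of real symmetric matrices\<close>

(* Vectors are functions nat => real of which only the entries below the dimension matter;
   this lets the unit sphere be treated as a compact set in the product topology. *)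
definition quad_form :: "real mat \<Rightarrow> (nat \<Rightarrow> real) \<Rightarrow> real" where
  "quad_form A x = (\<Sum>i<dim_row A. \<Sum>j<dim_row A. x i * A $$ (i, j) * x j)"

definition sum_sq :: "nat \<Rightarrow> (nat \<Rightarrow> real) \<Rightarrow> real" where
  "sum_sq n x = (\<Sum>i<n. (x i)\<^sup>2)"

lemma sum_sq_nonneg: "0 \<le> sum_sq n x"
  unfolding sum_sq_def by (simp add: sum_nonneg)

lemma sum_sq_eq_0_iff: "sum_sq n x = 0 \<longleftrightarrow> (\<forall>i<n. x i = 0)"
  unfolding sum_sq_def by (auto simp: sum_nonneg_eq_0_iff)

lemma sum_sq_pos_iff: "0 < sum_sq n x \<longleftrightarrow> (\<exists>i<n. x i \<noteq> 0)"
  using sum_sq_nonneg[of n x] sum_sq_eq_0_iff[of n x] by auto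

lemma sum_sq_scale: "sum_sq n (\<lambda>i. c * x i) = c\<^sup>2 * sum_sq n x"
  unfolding sum_sq_def by (simp add: sum_distrib_left power_mult_distrib)

lemma sum_sq_add_unit:
  assumes "k < n"
  shows "sum_sq n (\<lambda>i. v i + (if i = k then t else 0)) = sum_sq n v + 2 * t * v k + t\<^sup>2"
proof -
  have "sum_sq n (\<lambda>i. v i + (if i = k then t else 0))
      = (\<Sum>i<n. (v i)\<^sup>2 + (if i = k then 2 * t * v k + t\<^sup>2 else 0))"
    unfolding sum_sq_def by (intro sum.cong) (auto simp: power2_eq_square algebra_simps)
  then show ?thesis
    using assms by (simp add: sum.distrib sum_sq_def)
qed

lemma quad_form_cong:
  "(\<And>i. i < dim_row A \<Longrightarrow> x i = y i) \<Longrightarrow> quad_form A x = quad_form A y"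
  unfolding quad_form_def by (intro sum.cong) auto

lemma quad_form_scale: "quad_form A (\<lambda>i. c * x i) = c\<^sup>2 * quad_form A x"
  unfolding quad_form_def by (simp add: sum_distrib_left power2_eq_square mult_ac)

lemma quad_form_eq_0_if_sum_sq_eq_0:
  assumes "A \<in> carrier_mat n n" "sum_sq n x = 0"
  shows "quad_form A x = 0"
proof -
  have "quad_form A x = quad_form A (\<lambda>_. 0)"
    using assms by (intro quad_form_cong) (auto simp: sum_sq_eq_0_iff)
  then show ?thesis by (simp add: quad_form_def)
qed

lemma quad_form_add_unit:
  assumes A: "A \<in> carrier_mat n n" and sym: "transpose_mat A = A" and k: "k < n"
  shows "quad_form A (\<lambda>i. v i + (if i = k then t else 0))
    = quad_form A v + 2 * t * (\<Sum>j<n. A $$ (k, j) * v j) + t\<^sup>2 * A $$ (k, k)"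
proof -
  define e where "e i = (if i = k then t else 0)" for i
  define Av where "Av = (\<Sum>j<n. A $$ (k, j) * v j)"
  have col: "A $$ (i, k) = A $$ (k, i)" if "i < n" for i
    using that k A by (metis carrier_matD index_transpose_mat(1) sym)
  have left: "(\<Sum>i<n. \<Sum>j<n. e i * A $$ (i, j) * v j) = t * Av"
  proof -
    have "(\<Sum>i<n. \<Sum>j<n. e i * A $$ (i, j) * v j) = (\<Sum>i<n. if i = k then t * Av else 0)"
      by (intro sum.cong) (auto simp: e_def Av_def sum_distrib_left mult.assoc)
    then show ?thesis using k by simp
  qed
  have right: "(\<Sum>i<n. \<Sum>j<n. v i * A $$ (i, j) * e j) = t * Av"
  proof -
    have "(\<Sum>i<n. \<Sum>j<n. v i * A $$ (i, j) * e j) = (\<Sum>i<n. t * (A $$ (k, i) * v i))"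
      using k by (intro sum.cong) (auto simp: e_def col if_distrib cong: if_cong)
    then show ?thesis by (simp add: Av_def sum_distrib_left)
  qed
  have both: "(\<Sum>i<n. \<Sum>j<n. e i * A $$ (i, j) * e j) = t\<^sup>2 * A $$ (k, k)"
  proof -
    have "(\<Sum>i<n. \<Sum>j<n. e i * A $$ (i, j) * e j) = (\<Sum>i<n. if i = k then t\<^sup>2 * A $$ (k, k) else 0)"
      using k by (intro sum.cong) (auto simp: e_def power2_eq_square if_distrib cong: if_cong)
    then show ?thesis using k by simp
  qed
  have "quad_form A (\<lambda>i. v i + e i) = quad_form A v
      + (\<Sum>i<n. \<Sum>j<n. e i * A $$ (i, j) * v j) + (\<Sum>i<n. \<Sum>j<n. v i * A $$ (i, j) * e j)
      + (\<Sum>i<n. \<Sum>j<n. e i * A $$ (i, j) * e j)"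
    using A by (simp add: quad_form_def distrib_left distrib_right sum.distrib)
  also have "\<dots> = quad_form A v + 2 * t * Av + t\<^sup>2 * A $$ (k, k)"
    unfolding left right both by simp
  finally show ?thesis unfolding e_def Av_def .
qed

lemma linear_plus_quadratic_nonpos_imp_zero:
  fixes b c :: real
  assumes nonpos: "\<And>t. b * t + c * t\<^sup>2 \<le> 0"
  shows "b = 0"
proof (rule ccontr)
  assume "b \<noteq> 0"
  define d where "d = \<bar>c\<bar> + 1"
  have d: "0 < d" "1 \<le> d + c" unfolding d_def by auto
  have "b * (b / d) + c * (b / d)\<^sup>2 = b\<^sup>2 * (d + c) / d\<^sup>2"
    using d by (simp add: field_simps power2_eq_square)
  also have "\<dots> \<ge> b\<^sup>2 / d\<^sup>2"
    using mult_left_mono[OF d(2), of "b\<^sup>2"] by (intro divide_right_mono) auto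
  finally have "b\<^sup>2 / d\<^sup>2 \<le> 0" using nonpos[of "b / d"] by linarith
  moreover have "0 < b\<^sup>2 / d\<^sup>2" using \<open>b \<noteq> 0\<close> d by simp
  ultimately show False by linarith
qed

lemma continuous_on_coordinate [continuous_intros]:
  "continuous_on S (\<lambda>x :: nat \<Rightarrow> real. x i)"
  by (rule continuous_on_subset[OF continuous_on_product_coordinates]) simp

lemma quad_form_attains_max_on_sphere:
  assumes A: "A \<in> carrier_mat n n" and n: "0 < n"
  shows "\<exists>v. sum_sq n v = 1 \<and> (\<forall>y. sum_sq n y = 1 \<longrightarrow> quad_form A y \<le> quad_form A v)"
proof -
  define B where "B = PiE UNIV (\<lambda>i. if i < n then {-1..1} else {0::real})"
  define S where "S = B \<inter> {x. sum_sq n x = 1}"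
  have "compactin (product_topology (\<lambda>_. euclidean) UNIV) B"
    unfolding B_def by (subst compactin_PiE) auto
  then have "compact B" by (simp add: euclidean_product_topology)
  moreover have "closed {x. sum_sq n x = 1}"
    unfolding sum_sq_def by (intro closed_Collect_eq continuous_intros)
  ultimately have "compact S" unfolding S_def by (rule compact_Int_closed)
  moreover have "continuous_on S (quad_form A)"
    unfolding quad_form_def by (intro continuous_intros)
  moreover have "(\<lambda>i. if i = 0 then 1 else 0) \<in> S"
  proof -
    have "(\<Sum>i<n. (if i = 0 then 1 else 0 :: real)\<^sup>2) = (\<Sum>i<n. if i = 0 then 1 else 0)"
      by (intro sum.cong) auto
    then show ?thesis using n by (auto simp: S_def B_def sum_sq_def PiE_def extensional_def)
  qed
  ultimately obtain v where v: "v \<in> S" and vmax: "\<And>y. y \<in> S \<Longrightarrow> quad_form A y \<le> quad_form A v"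
    using continuous_attains_sup by (metis empty_iff)
  have "quad_form A y \<le> quad_form A v" if y: "sum_sq n y = 1" for y
  proof -
    define y' where "y' i = (if i < n then y i else 0)" for i
    have "\<bar>y i\<bar> \<le> 1" if "i < n" for i
    proof -
      have "(y i)\<^sup>2 \<le> sum_sq n y"
        unfolding sum_sq_def using that by (intro member_le_sum) auto
      then show ?thesis using y by (simp add: abs_square_le_1)
    qed
    moreover have "sum_sq n y' = sum_sq n y"
      unfolding sum_sq_def y'_def by (intro sum.cong) auto
    ultimately have "y' \<in> S"
      using y by (auto simp: S_def B_def y'_def PiE_def extensional_def abs_le_iff)
    moreover have "quad_form A y' = quad_form A y"
      using A by (intro quad_form_cong) (auto simp: y'_def)
    ultimately show ?thesis using vmax by metis
  qed
  then show ?thesis using v by (auto simp: S_def)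
qed

lemma quad_form_le_max_rayleigh:
  assumes A: "A \<in> carrier_mat n n" and n: "0 < n"
  shows "\<exists>v. sum_sq n v = 1 \<and> (\<forall>y. quad_form A y \<le> quad_form A v * sum_sq n y)"
proof -
  obtain v where v1: "sum_sq n v = 1"
    and vmax: "\<And>y. sum_sq n y = 1 \<Longrightarrow> quad_form A y \<le> quad_form A v"
    using quad_form_attains_max_on_sphere[OF A n] by blast
  have "quad_form A y \<le> quad_form A v * sum_sq n y" for y
  proof (cases "sum_sq n y = 0")
    case True
    then show ?thesis using quad_form_eq_0_if_sum_sq_eq_0[OF A] by simp
  next
    case False
    then have pos: "0 < sum_sq n y" using sum_sq_nonneg[of n y] by simp
    define c where "c = 1 / sqrt (sum_sq n y)"
    have c2: "c\<^sup>2 * sum_sq n y = 1" using pos by (simp add: c_def power_divide)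
    have "c\<^sup>2 * quad_form A y \<le> quad_form A v"
      using vmax[of "\<lambda>i. c * y i"] by (simp add: sum_sq_scale quad_form_scale c2)
    then have "c\<^sup>2 * quad_form A y * sum_sq n y \<le> quad_form A v * sum_sq n y"
      using pos by (simp add: mult_right_mono)
    then show ?thesis using c2 by (simp add: mult.commute mult.left_commute)
  qed
  then show ?thesis using v1 by blast
qed

lemma eigen_equation_of_rayleigh_max:
  assumes A: "A \<in> carrier_mat n n" and sym: "transpose_mat A = A"
    and bound: "\<And>y. quad_form A y \<le> \<mu> * sum_sq n y"
    and eq: "quad_form A v = \<mu> * sum_sq n v" and k: "k < n"
  shows "(\<Sum>j<n. A $$ (k, j) * v j) = \<mu> * v k"
proof -
  have "2 * ((\<Sum>j<n. A $$ (k, j) * v j) - \<mu> * v k) * t + (A $$ (k, k) - \<mu>) * t\<^sup>2 \<le> 0" for t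
    using bound[of "\<lambda>i. v i + (if i = k then t else 0)"] eq
    unfolding quad_form_add_unit[OF A sym k] sum_sq_add_unit[OF k] by (simp add: algebra_simps)
  from linear_plus_quadratic_nonpos_imp_zero[OF this] show ?thesis by simp
qed

lemma mult_mat_vec_vec_index:
  assumes "A \<in> carrier_mat n n" "i < n"
  shows "(A *\<^sub>v vec n v) $ i = (\<Sum>j<n. A $$ (i, j) * v j)"
  using assms by (simp add: scalar_prod_def lessThan_atLeast0)

lemma eigenvalue_iff_eigenfunction:
  assumes A: "A \<in> carrier_mat n n"
  shows "eigenvalue A k \<longleftrightarrow>
    (\<exists>v. (\<exists>i<n. v i \<noteq> 0) \<and> (\<forall>i<n. (\<Sum>j<n. A $$ (i, j) * v j) = k * v i))"
proof
  assume "eigenvalue A k"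
  then obtain w where w: "w \<in> carrier_vec n" "w \<noteq> 0\<^sub>v n" "A *\<^sub>v w = k \<cdot>\<^sub>v w"
    using A unfolding eigenvalue_def eigenvector_def by auto
  have w_vec: "vec n (\<lambda>j. w $ j) = w" using w(1) by auto
  have "\<exists>i<n. w $ i \<noteq> 0"
  proof (rule ccontr)
    assume "\<not> (\<exists>i<n. w $ i \<noteq> 0)"
    then have "w = 0\<^sub>v n" using w(1) by (intro eq_vecI) auto
    then show False using w(2) by simp
  qed
  moreover have "(\<Sum>j<n. A $$ (i, j) * w $ j) = k * w $ i" if "i < n" for i
    using arg_cong[OF w(3), of "\<lambda>u. u $ i"] mult_mat_vec_vec_index[OF A that, of "\<lambda>j. w $ j"]
      that w(1) w_vec by simp
  ultimately show "\<exists>v. (\<exists>i<n. v i \<noteq> 0) \<and> (\<forall>i<n. (\<Sum>j<n. A $$ (i, j) * v j) = k * v i)"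
    by blast
next
  assume "\<exists>v. (\<exists>i<n. v i \<noteq> 0) \<and> (\<forall>i<n. (\<Sum>j<n. A $$ (i, j) * v j) = k * v i)"
  then obtain v where v0: "\<exists>i<n. v i \<noteq> 0" and ev: "\<forall>i<n. (\<Sum>j<n. A $$ (i, j) * v j) = k * v i"
    by blast
  have "vec n v \<noteq> 0\<^sub>v n"
    using v0 by (metis index_vec index_zero_vec(1))
  moreover have "A *\<^sub>v vec n v = k \<cdot>\<^sub>v vec n v"
  proof -
    have "(A *\<^sub>v vec n v) $ i = k * v i" if "i < n" for i
      using mult_mat_vec_vec_index[OF A that, of v] ev that by metis
    then show ?thesis using A by (intro eq_vecI) auto
  qed
  ultimately show "eigenvalue A k"
    using A unfolding eigenvalue_def eigenvector_def by (intro exI[of _ "vec n v"]) auto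
qed

lemma quad_form_eigenfunction:
  assumes A: "A \<in> carrier_mat n n"
    and ev: "\<forall>i<n. (\<Sum>j<n. A $$ (i, j) * v j) = k * v i"
  shows "quad_form A v = k * sum_sq n v"
proof -
  have "quad_form A v = (\<Sum>i<n. v i * (\<Sum>j<n. A $$ (i, j) * v j))"
    using A by (simp add: quad_form_def sum_distrib_left mult.assoc)
  also have "\<dots> = (\<Sum>i<n. k * (v i)\<^sup>2)"
    using ev by (intro sum.cong) (auto simp: power2_eq_square)
  finally show ?thesis by (simp add: sum_sq_def sum_distrib_left)
qed

lemma symmetric_eigenvalue_ge_rayleigh:
  assumes A: "A \<in> carrier_mat n n" and sym: "transpose_mat A = A" and n: "0 < n"
  shows "\<exists>k. eigenvalue A k \<and> (\<forall>x. quad_form A x \<le> k * sum_sq n x)"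
proof -
  obtain v where v1: "sum_sq n v = 1"
    and max: "\<And>y. quad_form A y \<le> quad_form A v * sum_sq n y"
    using quad_form_le_max_rayleigh[OF A n] by blast
  have "\<forall>i<n. (\<Sum>j<n. A $$ (i, j) * v j) = quad_form A v * v i"
    using eigen_equation_of_rayleigh_max[OF A sym max] v1 by simp
  moreover have "\<exists>i<n. v i \<noteq> 0" unfolding sum_sq_pos_iff[symmetric] v1 by simp
  ultimately have "eigenvalue A (quad_form A v)"
    using eigenvalue_iff_eigenfunction[OF A] by blast
  then show ?thesis using max by blast
qed

lemma largest_eigenvalue_gt:
  assumes A: "A \<in> carrier_mat n n" and sym: "transpose_mat A = A"
    and gt: "c * sum_sq n x < quad_form A x"
  shows "c < largest_eigenvalue A"
proof -
  have pos: "0 < sum_sq n x"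
  proof (rule ccontr)
    assume "\<not> 0 < sum_sq n x"
    then have "sum_sq n x = 0" using sum_sq_nonneg[of n x] by simp
    then show False using gt quad_form_eq_0_if_sum_sq_eq_0[OF A] by simp
  qed
  then have "0 < n" by (cases n) (simp_all add: sum_sq_def)
  then obtain k where k: "eigenvalue A k" "quad_form A x \<le> k * sum_sq n x"
    using symmetric_eigenvalue_ge_rayleigh[OF A sym] by blast
  have "c * sum_sq n x < k * sum_sq n x" using gt k(2) by linarith
  then have "c < k" using pos by simp
  also have "k \<le> largest_eigenvalue A"
    using k(1) card_finite_spectrum(1)[OF A]
    unfolding largest_eigenvalue_def spectrum_def by (auto intro: Max_ge)
  finally show ?thesis .
qed

lemma largest_eigenvalue_lt:
  assumes A: "A \<in> carrier_mat n n" and sym: "transpose_mat A = A" and n: "0 < n"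
    and lt: "\<And>x. 0 < sum_sq n x \<Longrightarrow> quad_form A x < d * sum_sq n x"
  shows "largest_eigenvalue A < d"
proof -
  have "spectrum A \<noteq> {}"
    using symmetric_eigenvalue_ge_rayleigh[OF A sym n] by (auto simp: spectrum_def)
  then have "eigenvalue A (largest_eigenvalue A)"
    using Max_in[OF card_finite_spectrum(1)[OF A]]
    unfolding largest_eigenvalue_def spectrum_def by auto
  then obtain v where v0: "\<exists>i<n. v i \<noteq> 0"
    and ev: "\<forall>i<n. (\<Sum>j<n. A $$ (i, j) * v j) = largest_eigenvalue A * v i"
    using eigenvalue_iff_eigenfunction[OF A] by blast
  have pos: "0 < sum_sq n v" using v0 by (simp add: sum_sq_pos_iff)
  have "largest_eigenvalue A * sum_sq n v < d * sum_sq n v"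
    using lt[OF pos] quad_form_eigenfunction[OF A ev] by simp
  then show ?thesis using pos by simp
qed

section \<open>The quadratic form of the matrix\<close>

lemma dim_row_heis_mat [simp]: "dim_row (heis_mat n) = n"
  and heis_mat_carrier: "heis_mat n \<in> carrier_mat n n"
  unfolding heis_mat_def by simp_all

lemma heis_mat_symmetric: "transpose_mat (heis_mat n) = heis_mat n"
  by (rule eq_matI) (auto simp: heis_mat_def)

lemma sum_lessThan_shift_mod:
  assumes "0 < n"
  shows "(\<Sum>i<n. f (Suc i mod n)) = (\<Sum>i<n. f i)"
proof -
  obtain m where n: "n = Suc m" using assms by (cases n) auto
  have "(\<Sum>i<m. f (Suc i mod Suc m)) = (\<Sum>i<m. f (Suc i))"
    by (intro sum.cong) auto
  then have "(\<Sum>i<Suc m. f (Suc i mod Suc m)) = (\<Sum>i<m. f (Suc i)) + f 0"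
    by simp
  also have "\<dots> = (\<Sum>i<Suc m. f i)"
    by (subst sum.lessThan_Suc_shift) (simp add: add.commute)
  finally show ?thesis using n by simp
qed

lemma Suc_mod_eq: "i < n \<Longrightarrow> Suc i mod n = (if i = n - 1 then 0 else Suc i)"
  by auto

lemma pred_mod_eq:
  fixes i n :: nat
  assumes "i < n"
  shows "(i + n - 1) mod n = (if i = 0 then n - 1 else i - 1)"
proof (cases i)
  case (Suc k)
  then have "i + n - 1 = k + n" by simp
  then show ?thesis using Suc assms by simp
qed (use assms in simp)

lemma pred_Suc_mod: "i < n \<Longrightarrow> (Suc i mod n + n - 1) mod n = i"
  by (auto simp: Suc_mod_eq pred_mod_eq)

lemma heis_mat_row:
  assumes n: "3 \<le> n" and i: "i < n"
  shows "(\<Sum>j<n. heis_mat n $$ (i, j) * x j)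
    = 2 * cos (2 * pi * real i / real n) * x i + x (Suc i mod n) + x ((i + n - 1) mod n)"
proof -
  let ?c = "2 * cos (2 * pi * real i / real n)"
  have "heis_mat n $$ (i, j) = (if j = i then ?c else 0) + (if j = Suc i mod n then 1 else 0)
      + (if j = (i + n - 1) mod n then 1 else 0)" if "j < n" for j
    using n i that unfolding Suc_mod_eq[OF i] pred_mod_eq[OF i] by (auto simp: heis_mat_def)
  then have "(\<Sum>j<n. heis_mat n $$ (i, j) * x j) = (\<Sum>j<n. (if j = i then ?c * x i else 0)
      + (if j = Suc i mod n then x (Suc i mod n) else 0)
      + (if j = (i + n - 1) mod n then x ((i + n - 1) mod n) else 0))"
    by (intro sum.cong) (auto simp: algebra_simps)
  then show ?thesis using n i by (simp add: sum.distrib)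
qed

definition cycle_energy :: "nat \<Rightarrow> (nat \<Rightarrow> real) \<Rightarrow> real" where
  "cycle_energy n x = (\<Sum>i<n. (x i - x (Suc i mod n))\<^sup>2)"

definition heis_potential :: "nat \<Rightarrow> (nat \<Rightarrow> real) \<Rightarrow> real" where
  "heis_potential n x = (\<Sum>i<n. (2 - 2 * cos (2 * pi * real i / real n)) * (x i)\<^sup>2)"

lemma cycle_energy_nonneg: "0 \<le> cycle_energy n x"
  unfolding cycle_energy_def by (simp add: sum_nonneg)

lemma cycle_energy_eq:
  assumes "0 < n"
  shows "cycle_energy n x = 2 * sum_sq n x - 2 * (\<Sum>i<n. x i * x (Suc i mod n))"
proof -
  have "cycle_energy n x = sum_sq n x + (\<Sum>i<n. (x (Suc i mod n))\<^sup>2)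
      - 2 * (\<Sum>i<n. x i * x (Suc i mod n))"
    by (simp add: cycle_energy_def sum_sq_def power2_diff sum.distrib sum_subtractf
        sum_distrib_left algebra_simps)
  then show ?thesis
    using sum_lessThan_shift_mod[OF assms, of "\<lambda>i. (x i)\<^sup>2"] by (simp add: sum_sq_def)
qed

lemma heis_potential_eq:
  "heis_potential n x = 2 * sum_sq n x - 2 * (\<Sum>i<n. cos (2 * pi * real i / real n) * (x i)\<^sup>2)"
  by (simp add: heis_potential_def sum_sq_def left_diff_distrib sum_subtractf sum_distrib_left
      mult.assoc)

lemma quad_form_heis_mat:
  assumes n: "3 \<le> n"
  shows "quad_form (heis_mat n) x = 4 * sum_sq n x - heis_potential n x - cycle_energy n x"
proof -
  have n0: "0 < n" using n by simp
  have "(\<Sum>i<n. x i * x ((i + n - 1) mod n))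
      = (\<Sum>i<n. x (Suc i mod n) * x ((Suc i mod n + n - 1) mod n))"
    by (rule sum_lessThan_shift_mod[OF n0, symmetric])
  also have "\<dots> = (\<Sum>i<n. x i * x (Suc i mod n))"
    using pred_Suc_mod by (intro sum.cong) auto
  finally have pred_sum: "(\<Sum>i<n. x i * x ((i + n - 1) mod n)) = (\<Sum>i<n. x i * x (Suc i mod n))" .
  have "quad_form (heis_mat n) x = (\<Sum>i<n. x i * (\<Sum>j<n. heis_mat n $$ (i, j) * x j))"
    by (simp add: quad_form_def sum_distrib_left mult.assoc)
  also have "\<dots> = (\<Sum>i<n. 2 * (cos (2 * pi * real i / real n) * (x i)\<^sup>2)
      + x i * x (Suc i mod n) + x i * x ((i + n - 1) mod n))"
  proof (intro sum.cong refl)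
    fix i assume "i \<in> {..<n}"
    then have i: "i < n" by simp
    show "x i * (\<Sum>j<n. heis_mat n $$ (i, j) * x j) = 2 * (cos (2 * pi * real i / real n) * (x i)\<^sup>2)
      + x i * x (Suc i mod n) + x i * x ((i + n - 1) mod n)"
      unfolding heis_mat_row[OF n i] by (simp add: algebra_simps power2_eq_square)
  qed
  finally show ?thesis
    using pred_sum
    by (simp add: sum.distrib heis_potential_eq cycle_energy_eq[OF n0] sum_distrib_left[symmetric])
qed

section \<open>Upper bound by summation by parts\<close>

lemma cos_ge_one_minus_sq_div_2: "1 - x\<^sup>2 / 2 \<le> cos (x :: real)"
proof -
  have "\<bar>sin (x / 2)\<bar> \<le> \<bar>x / 2\<bar>" by (rule abs_sin_x_le_abs_x)
  then have "(sin (x / 2))\<^sup>2 \<le> (x / 2)\<^sup>2"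
    by (metis abs_ge_zero power2_abs power_mono)
  moreover have "cos x = 1 - 2 * (sin (x / 2))\<^sup>2"
    using cos_double_sin[of "x / 2"] by simp
  ultimately show ?thesis by (simp add: power_divide)
qed

lemma sin_ge_x_minus_cube_div_6:
  fixes x :: real
  assumes "0 \<le> x"
  shows "x - x ^ 3 / 6 \<le> sin x"
proof -
  let ?f = "\<lambda>u. sin u - u + u ^ 3 / 6"
  have "?f 0 \<le> ?f x"
  proof (rule DERIV_nonneg_imp_nondecreasing[OF assms])
    fix u :: real
    have "DERIV ?f u :> cos u - 1 + u\<^sup>2 / 2"
      by (auto intro!: derivative_eq_intros simp: field_simps power2_eq_square)
    moreover have "0 \<le> cos u - 1 + u\<^sup>2 / 2" using cos_ge_one_minus_sq_div_2[of u] by simp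
    ultimately show "\<exists>y. DERIV ?f u :> y \<and> 0 \<le> y" by blast
  qed
  then show ?thesis by simp
qed

lemma sin_pi_div_bounds:
  assumes n: "10 \<le> n"
  shows "3 / (2 * real n) \<le> sin (pi / real n)" and "sin (pi / real n) \<le> 4 / real n"
proof -
  define x where "x = pi / real n"
  have x0: "0 \<le> x" by (simp add: x_def)
  have "x \<le> 1 / 2" using pi_less_4 n by (simp add: x_def field_simps)
  then have "x\<^sup>2 \<le> 1 / 4" using x0 power_mono[of x "1/2" 2] by (simp add: power_divide)
  then have "3 / 4 \<le> 1 - x\<^sup>2 / 6" by simp
  moreover have "2 / real n \<le> x" using pi_ge_two by (simp add: x_def divide_right_mono)
  ultimately have "2 / real n * (3 / 4) \<le> x * (1 - x\<^sup>2 / 6)"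
    using x0 by (intro mult_mono) auto
  also have "\<dots> = x - x ^ 3 / 6" by (simp add: power2_eq_square power3_eq_cube algebra_simps)
  also have "\<dots> \<le> sin x" using x0 by (rule sin_ge_x_minus_cube_div_6)
  finally show "3 / (2 * real n) \<le> sin (pi / real n)" by (simp add: x_def)
  have "sin x \<le> x" using x0 by (rule sin_x_le_x)
  also have "x \<le> 4 / real n" using pi_less_4 by (simp add: x_def divide_right_mono)
  finally show "sin (pi / real n) \<le> 4 / real n" by (simp add: x_def)
qed

lemma sin_add_sq_plus_sin_diff_sq_le:
  fixes a h :: real
  shows "(sin (a + h))\<^sup>2 + (sin (a - h))\<^sup>2 \<le> 4 * (1 - cos a) + 2 * (sin h)\<^sup>2"
proof -
  have "(sin (a + h))\<^sup>2 + (sin (a - h))\<^sup>2 = 2 * (sin a)\<^sup>2 * (cos h)\<^sup>2 + 2 * (cos a)\<^sup>2 * (sin h)\<^sup>2"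
    by (simp add: sin_add sin_diff power2_eq_square algebra_simps)
  moreover have "(cos h)\<^sup>2 \<le> 1" and "(cos a)\<^sup>2 \<le> 1"
    by (simp_all add: abs_square_le_1)
  then have "(sin a)\<^sup>2 * (cos h)\<^sup>2 \<le> (sin a)\<^sup>2" and "(cos a)\<^sup>2 * (sin h)\<^sup>2 \<le> (sin h)\<^sup>2"
    using mult_left_mono[of "(cos h)\<^sup>2" 1 "(sin a)\<^sup>2"] mult_right_mono[of "(cos a)\<^sup>2" 1 "(sin h)\<^sup>2"]
    by simp_all
  moreover have "(sin a)\<^sup>2 \<le> 2 * (1 - cos a)"
  proof -
    have "(1 - cos a) * (1 + cos a) \<le> (1 - cos a) * 2"
      by (intro mult_left_mono) auto
    moreover have "(1 - cos a) * (1 + cos a) = (sin a)\<^sup>2"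
      by (simp add: sin_squared_eq) (simp add: power2_eq_square algebra_simps)
    ultimately show ?thesis by simp
  qed
  ultimately show ?thesis by linarith
qed

lemma mult_diff_squares_le: "g * (a\<^sup>2 - b\<^sup>2) \<le> g\<^sup>2 * (a\<^sup>2 + b\<^sup>2) / 2 + (a - b :: real)\<^sup>2"
proof -
  have "0 \<le> (g * (a + b) - 2 * (a - b))\<^sup>2 + (g * (a - b))\<^sup>2" by simp
  also have "\<dots> = 4 * (g\<^sup>2 * (a\<^sup>2 + b\<^sup>2) / 2 + (a - b)\<^sup>2 - g * (a\<^sup>2 - b\<^sup>2))"
    by (simp add: power2_eq_square field_simps)
  finally have "0 \<le> g\<^sup>2 * (a\<^sup>2 + b\<^sup>2) / 2 + (a - b)\<^sup>2 - g * (a\<^sup>2 - b\<^sup>2)" by simp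
  then show ?thesis by simp
qed

lemma sin_add_half_step_eq:
  assumes i: "i < n"
  shows "sin (2 * pi * real i / real n + pi / real n)
    = sin (2 * pi * real (Suc i mod n) / real n - pi / real n)"
proof (cases "i = n - 1")
  case True
  have arg: "2 * pi * real i / real n + pi / real n = - (pi / real n) + 2 * pi"
    using True i by (simp add: of_nat_diff field_simps)
  have "Suc i mod n = 0" using True i by simp
  then show ?thesis unfolding arg by simp
next
  case False
  then have "2 * pi * real (Suc i mod n) / real n = 2 * pi * real i / real n + 2 * (pi / real n)"
    using i by (simp add: Suc_mod_eq add_divide_distrib algebra_simps)
  then show ?thesis by (simp add: add.commute)
qed

lemma heis_summation_by_parts:
  assumes n: "0 < n"
  shows "(\<Sum>i<n. sin (2 * pi * real i / real n + pi / real n) * ((x i)\<^sup>2 - (x (Suc i mod n))\<^sup>2))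
    = sin (pi / real n) * (2 * sum_sq n x - heis_potential n x)"
proof -
  define \<theta> where "\<theta> i = 2 * pi * real i / real n" for i
  define h where "h = pi / real n"
  have "(\<Sum>i<n. sin (\<theta> i + h) * (x (Suc i mod n))\<^sup>2) = (\<Sum>i<n. sin (\<theta> i - h) * (x i)\<^sup>2)"
    using sum_lessThan_shift_mod[OF n, of "\<lambda>i. sin (\<theta> i - h) * (x i)\<^sup>2"]
    by (simp add: sin_add_half_step_eq \<theta>_def h_def)
  then have "(\<Sum>i<n. sin (\<theta> i + h) * ((x i)\<^sup>2 - (x (Suc i mod n))\<^sup>2))
      = (\<Sum>i<n. (sin (\<theta> i + h) - sin (\<theta> i - h)) * (x i)\<^sup>2)"
    by (simp add: algebra_simps sum_subtractf)
  also have "\<dots> = sin h * (2 * sum_sq n x - heis_potential n x)"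
    by (simp add: heis_potential_eq \<theta>_def sin_add sin_diff sum_distrib_left algebra_simps)
  finally show ?thesis unfolding \<theta>_def h_def .
qed

lemma heis_summation_by_parts_le:
  assumes n: "0 < n"
  shows "(\<Sum>i<n. sin (2 * pi * real i / real n + pi / real n) * ((x i)\<^sup>2 - (x (Suc i mod n))\<^sup>2))
    \<le> heis_potential n x + (sin (pi / real n))\<^sup>2 * sum_sq n x + cycle_energy n x"
proof -
  define \<theta> where "\<theta> i = 2 * pi * real i / real n" for i
  define h where "h = pi / real n"
  define g where "g i = sin (\<theta> i + h)" for i
  define G where "G i = sin (\<theta> i - h)" for i
  define y where "y i = x (Suc i mod n)" for i
  have "(\<Sum>i<n. (g i)\<^sup>2 * (y i)\<^sup>2) = (\<Sum>i<n. (G i)\<^sup>2 * (x i)\<^sup>2)"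
    using sum_lessThan_shift_mod[OF n, of "\<lambda>i. (G i)\<^sup>2 * (x i)\<^sup>2"]
    by (simp add: sin_add_half_step_eq g_def G_def y_def \<theta>_def h_def)
  then have "(\<Sum>i<n. (g i)\<^sup>2 * ((x i)\<^sup>2 + (y i)\<^sup>2) / 2 + (x i - y i)\<^sup>2)
      = (\<Sum>i<n. ((g i)\<^sup>2 + (G i)\<^sup>2) / 2 * (x i)\<^sup>2) + cycle_energy n x"
    by (simp add: cycle_energy_def y_def sum.distrib add_divide_distrib algebra_simps
        sum_divide_distrib[symmetric])
  moreover have "(\<Sum>i<n. g i * ((x i)\<^sup>2 - (y i)\<^sup>2))
      \<le> (\<Sum>i<n. (g i)\<^sup>2 * ((x i)\<^sup>2 + (y i)\<^sup>2) / 2 + (x i - y i)\<^sup>2)"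
    by (intro sum_mono mult_diff_squares_le)
  moreover have "(\<Sum>i<n. ((g i)\<^sup>2 + (G i)\<^sup>2) / 2 * (x i)\<^sup>2)
      \<le> (\<Sum>i<n. (2 - 2 * cos (\<theta> i)) * (x i)\<^sup>2 + (sin h)\<^sup>2 * (x i)\<^sup>2)"
  proof (intro sum_mono)
    fix i
    have "((g i)\<^sup>2 + (G i)\<^sup>2) / 2 \<le> 2 - 2 * cos (\<theta> i) + (sin h)\<^sup>2"
      using sin_add_sq_plus_sin_diff_sq_le[of "\<theta> i" h] unfolding g_def G_def by (simp add: field_simps)
    then show "((g i)\<^sup>2 + (G i)\<^sup>2) / 2 * (x i)\<^sup>2 \<le> (2 - 2 * cos (\<theta> i)) * (x i)\<^sup>2 + (sin h)\<^sup>2 * (x i)\<^sup>2"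
      by (simp only: distrib_right[symmetric] mult_right_mono zero_le_power2)
  qed
  moreover have "(\<Sum>i<n. (2 - 2 * cos (\<theta> i)) * (x i)\<^sup>2 + (sin h)\<^sup>2 * (x i)\<^sup>2)
      = heis_potential n x + (sin h)\<^sup>2 * sum_sq n x"
    by (simp add: heis_potential_def sum_sq_def \<theta>_def sum.distrib sum_distrib_left)
  ultimately show ?thesis unfolding g_def y_def \<theta>_def h_def by linarith
qed

lemma heis_potential_cycle_energy_ge:
  assumes n: "0 < n"
  defines "s \<equiv> sin (pi / real n)"
  shows "(2 * s - s\<^sup>2) * sum_sq n x \<le> (1 + s) * heis_potential n x + cycle_energy n x"
proof -
  have "s * (2 * sum_sq n x - heis_potential n x)
      \<le> heis_potential n x + s\<^sup>2 * sum_sq n x + cycle_energy n x"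
    using heis_summation_by_parts_le[OF n, of x] unfolding heis_summation_by_parts[OF n] s_def .
  then show ?thesis by (simp add: algebra_simps)
qed

lemma rate_ineq_of_sin_bounds:
  assumes n: "10 \<le> n"
    and s_lo: "3 / (2 * real n) \<le> s" and s_hi: "s \<le> 4 / real n"
  shows "2 / real n * (1 + s) < 2 * s - s\<^sup>2"
proof -
  have m: "10 \<le> real n" using n by simp
  have s0: "0 \<le> s" by (rule order_trans[OF _ s_lo]) simp
  have t_lo: "3 / 2 \<le> s * real n" and t_hi: "s * real n \<le> 4"
    using s_lo s_hi m by (simp_all add: field_simps)
  have "real n * 2 < 3 / 2 * (2 * real n - 6)" using m by simp
  also have "\<dots> \<le> s * real n * (2 * real n - 6)"
    using t_lo m by (intro mult_right_mono) auto
  finally have "real n * 2 < real n * (s * (2 * real n - 6))" by (simp add: mult_ac)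
  then have "2 < s * (2 * real n - 6)" using m by simp
  also have "\<dots> \<le> s * (2 * real n - 2 - s * real n)"
    using t_hi s0 by (intro mult_left_mono) auto
  finally have "2 + 2 * s < (2 * s - s\<^sup>2) * real n"
    by (simp add: power2_eq_square algebra_simps)
  then show ?thesis using m by (simp add: field_simps)
qed

lemma quad_form_heis_mat_lt:
  assumes n: "10 \<le> n" and pos: "0 < sum_sq n x"
  shows "quad_form (heis_mat n) x < (4 - 2 / real n) * sum_sq n x"
proof -
  define s where "s = sin (pi / real n)"
  define W where "W = heis_potential n x"
  define D where "D = cycle_energy n x"
  have s0: "0 \<le> s" using n by (simp add: s_def)
  have "2 / real n * (1 + s) * sum_sq n x < (2 * s - s\<^sup>2) * sum_sq n x"
    using mult_strict_right_mono[OF rate_ineq_of_sin_bounds[OF n sin_pi_div_bounds[OF n]] pos]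
    unfolding s_def .
  also have "\<dots> \<le> (1 + s) * W + D"
    using heis_potential_cycle_energy_ge[of n x] n by (simp add: s_def W_def D_def)
  also have "\<dots> \<le> (1 + s) * (W + D)"
    using s0 cycle_energy_nonneg[of n x] by (simp add: D_def algebra_simps)
  finally have "(1 + s) * (2 / real n * sum_sq n x) < (1 + s) * (W + D)"
    by (simp only: mult.commute mult.left_commute)
  then have "2 / real n * sum_sq n x < W + D"
    by (rule mult_left_less_imp_less) (use s0 in simp)
  then show ?thesis
    using n by (simp add: quad_form_heis_mat W_def D_def algebra_simps)
qed

section \<open>Lower bound from a tent vector\<close>

(* min i (n - i) is the cyclic distance from i to 0; truncated subtraction makes the tent
   vanish from distance L on. *)
definition tent :: "nat \<Rightarrow> nat \<Rightarrow> nat \<Rightarrow> real" where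
  "tent n L i = real (L - min i (n - i))"

definition tent_support :: "nat \<Rightarrow> nat \<Rightarrow> nat set" where
  "tent_support n L = {i. i < n \<and> min i (n - i) < L}"

lemma tent_eq_0: "i \<notin> tent_support n L \<Longrightarrow> i < n \<Longrightarrow> tent n L i = 0"
  by (auto simp: tent_def tent_support_def not_less)

lemma card_tent_support_le: "card (tent_support n L) \<le> 2 * L"
proof -
  have "card (tent_support n L) \<le> card ({..<L} \<union> {n - L<..<n})"
    by (intro card_mono) (auto simp: tent_support_def)
  also have "\<dots> \<le> card {..<L} + card {n - L<..<n}" by (rule card_Un_le)
  also have "\<dots> \<le> 2 * L" by simp
  finally show ?thesis .
qed

lemma sum_le_card_mult_bound:
  fixes f :: "nat \<Rightarrow> real"
  assumes "T \<subseteq> {..<n}" and "\<And>i. i < n \<Longrightarrow> f i \<le> of_bool (i \<in> T) * B"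
  shows "(\<Sum>i<n. f i) \<le> real (card T) * B"
proof -
  have "{..<n} \<inter> T = T" using assms(1) by blast
  then have card: "(\<Sum>i<n. of_bool (i \<in> T)) = real (card T)" by simp
  have "(\<Sum>i<n. f i) \<le> (\<Sum>i<n. of_bool (i \<in> T) * B)"
    using assms(2) by (intro sum_mono) auto
  also have "\<dots> = real (card T) * B"
    unfolding sum_distrib_right[symmetric] card ..
  finally show ?thesis .
qed

lemma tent_step_le:
  assumes "i < n"
  shows "\<bar>tent n L i - tent n L (Suc i mod n)\<bar> \<le> 1"
proof -
  define d where "d j = min j (n - j)" for j
  have "d i \<le> d (Suc i mod n) + 1 \<and> d (Suc i mod n) \<le> d i + 1"
    using assms by (auto simp: d_def Suc_mod_eq)
  then have "L - d i \<le> L - d (Suc i mod n) + 1 \<and> L - d (Suc i mod n) \<le> L - d i + 1"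
    by linarith
  then show ?thesis unfolding tent_def d_def[symmetric] by (simp add: abs_le_iff)
qed

lemma cycle_energy_tent_le:
  assumes n: "0 < n"
  shows "cycle_energy n (tent n L) \<le> 4 * real L"
proof -
  define \<psi> where "\<psi> i = (of_bool (i \<in> tent_support n L) :: real)" for i
  have "(tent n L i - tent n L (Suc i mod n))\<^sup>2 \<le> \<psi> i + \<psi> (Suc i mod n)" if i: "i < n" for i
  proof (cases "i \<in> tent_support n L \<or> Suc i mod n \<in> tent_support n L")
    case True
    then have "1 \<le> \<psi> i + \<psi> (Suc i mod n)" by (auto simp: \<psi>_def)
    moreover have "(tent n L i - tent n L (Suc i mod n))\<^sup>2 \<le> 1"
      using tent_step_le[OF i] by (simp add: abs_square_le_1)
    ultimately show ?thesis by linarith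
  next
    case False
    then show ?thesis using i n by (simp add: tent_eq_0 \<psi>_def)
  qed
  then have "cycle_energy n (tent n L) \<le> (\<Sum>i<n. \<psi> i + \<psi> (Suc i mod n))"
    unfolding cycle_energy_def by (intro sum_mono) auto
  also have "\<dots> = 2 * (\<Sum>i<n. \<psi> i)"
    by (simp add: sum.distrib sum_lessThan_shift_mod[OF n])
  also have "\<dots> = 2 * real (card (tent_support n L))"
    by (simp add: \<psi>_def tent_support_def Int_def conj_commute)
  also have "\<dots> \<le> 4 * real L"
    using card_tent_support_le[of n L] by simp
  finally show ?thesis .
qed

lemma cos_eq_cos_cyclic_dist:
  assumes "i < n"
  shows "cos (2 * pi * real i / real n) = cos (2 * pi * real (min i (n - i)) / real n)"
proof (cases "i \<le> n - i")
  case False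
  have "2 * pi * real (n - i) / real n = 2 * pi - 2 * pi * real i / real n"
    using assms by (simp add: of_nat_diff field_simps)
  then show ?thesis using False by (simp add: min_def cos_diff)
qed (simp add: min_def)

lemma one_minus_cos_mult_sq_le:
  fixes k l m :: real
  assumes "0 \<le> k" "k \<le> l"
  shows "(2 - 2 * cos (2 * pi * k / m)) * (l - k)\<^sup>2 \<le> 4 * l ^ 4 / m\<^sup>2"
proof -
  have "k * (l - k) \<le> l\<^sup>2 / 4"
    using sum_squares_ge_zero[of "l - 2 * k" 0] by (simp add: power2_eq_square algebra_simps)
  then have prod: "(k * (l - k))\<^sup>2 \<le> (l\<^sup>2 / 4)\<^sup>2"
    using assms by (intro power_mono) auto
  have pi2: "pi\<^sup>2 \<le> 16"
    using power_mono[OF less_imp_le[OF pi_less_4] pi_ge_zero, of 2] by simp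
  have "(2 - 2 * cos (2 * pi * k / m)) * (l - k)\<^sup>2 \<le> (2 * pi * k / m)\<^sup>2 * (l - k)\<^sup>2"
    using cos_ge_one_minus_sq_div_2[of "2 * pi * k / m"] by (intro mult_right_mono) auto
  also have "\<dots> = 4 * pi\<^sup>2 / m\<^sup>2 * (k * (l - k))\<^sup>2"
    by (simp add: power_mult_distrib power_divide mult_ac)
  also have "\<dots> \<le> 4 * pi\<^sup>2 / m\<^sup>2 * (l\<^sup>2 / 4)\<^sup>2"
    using prod by (intro mult_left_mono) auto
  also have "\<dots> = pi\<^sup>2 * l ^ 4 / (4 * m\<^sup>2)"
    by (simp add: power_divide power2_eq_square power4_eq_xxxx)
  also have "\<dots> \<le> 16 * l ^ 4 / (4 * m\<^sup>2)"
    using pi2 by (intro divide_right_mono mult_right_mono) auto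
  finally show ?thesis by simp
qed

lemma heis_potential_tent_le: "heis_potential n (tent n L) \<le> 8 * real L ^ 5 / (real n)\<^sup>2"
proof -
  have "heis_potential n (tent n L)
      \<le> real (card (tent_support n L)) * (4 * real L ^ 4 / (real n)\<^sup>2)"
    unfolding heis_potential_def
  proof (rule sum_le_card_mult_bound)
    show "tent_support n L \<subseteq> {..<n}" by (auto simp: tent_support_def)
    fix i assume i: "i < n"
    show "(2 - 2 * cos (2 * pi * real i / real n)) * (tent n L i)\<^sup>2
        \<le> of_bool (i \<in> tent_support n L) * (4 * real L ^ 4 / (real n)\<^sup>2)"
    proof (cases "i \<in> tent_support n L")
      case True
      then have "min i (n - i) \<le> L" by (simp add: tent_support_def)
      then show ?thesis
        using True one_minus_cos_mult_sq_le[of "real (min i (n - i))" "real L" "real n"]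
        by (simp add: cos_eq_cos_cyclic_dist[OF i] tent_def of_nat_diff)
    qed (simp add: tent_eq_0 i)
  qed
  also have "\<dots> \<le> 2 * real L * (4 * real L ^ 4 / (real n)\<^sup>2)"
    using card_tent_support_le[of n L] by (intro mult_right_mono) auto
  also have "\<dots> = 8 * real L ^ 5 / (real n)\<^sup>2"
    by (simp add: numeral_eq_Suc)
  finally show ?thesis .
qed

lemma sum_Suc_sq_ge: "real L ^ 3 / 3 \<le> (\<Sum>i<L. (real (Suc i))\<^sup>2)"
proof (induction L)
  case (Suc L)
  have "real (Suc L) ^ 3 / 3 = real L ^ 3 / 3 + ((real L)\<^sup>2 + real L + 1 / 3)"
    by (simp add: power3_eq_cube power2_eq_square algebra_simps)
  also have "\<dots> \<le> (\<Sum>i<L. (real (Suc i))\<^sup>2) + (real (Suc L))\<^sup>2"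
    using Suc.IH by (simp add: power2_eq_square algebra_simps)
  finally show ?case by simp
qed simp

lemma sum_sq_tent_ge:
  assumes "2 * L \<le> n"
  shows "real L ^ 3 / 3 \<le> sum_sq n (tent n L)"
proof -
  have "(\<Sum>i<L. (real (Suc i))\<^sup>2) = (\<Sum>i<L. (real (Suc (L - Suc i)))\<^sup>2)"
    by (rule sum.nat_diff_reindex[symmetric])
  also have "\<dots> = (\<Sum>i<L. (tent n L i)\<^sup>2)"
    using assms by (intro sum.cong) (auto simp: tent_def Suc_diff_Suc)
  also have "\<dots> \<le> sum_sq n (tent n L)"
    unfolding sum_sq_def using assms by (intro sum_mono2) auto
  finally show ?thesis using sum_Suc_sq_ge[of L] by linarith
qed

lemma tent_ratio_arith:
  fixes l m :: real
  assumes l: "10 \<le> l" and lm: "l\<^sup>2 \<le> m" and ml: "m < (l + 1)\<^sup>2"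
  shows "8 * l ^ 5 / m\<^sup>2 + 4 * l < 40 / m * (l ^ 3 / 3)"
proof -
  define p where "p = l\<^sup>2"
  have p0: "0 < p" using l by (simp add: p_def)
  have m0: "0 < m" using p0 lm unfolding p_def by linarith
  have "10 * l \<le> l * l" using l by (intro mult_right_mono) auto
  moreover have "(l + 1)\<^sup>2 = l * l + 2 * l + 1" by (simp add: power2_eq_square algebra_simps)
  ultimately have "3 * m < 4 * p" using l ml unfolding p_def power2_eq_square by linarith
  then have "m * (3 * m) < m * (4 * p)" using m0 by (rule mult_strict_left_mono)
  moreover have "p * p \<le> p * m" using lm p0 by (intro mult_left_mono) (auto simp: p_def)
  ultimately have "24 * (p * p) + 12 * (m * m) < 40 * (p * m)" by (simp add: algebra_simps)
  then have "l * (24 * (p * p) + 12 * (m * m)) / (3 * m\<^sup>2) < l * (40 * (p * m)) / (3 * m\<^sup>2)"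
    using l m0 by (intro divide_strict_right_mono mult_strict_left_mono) auto
  moreover have "8 * l ^ 5 / m\<^sup>2 + 4 * l = l * (24 * (p * p) + 12 * (m * m)) / (3 * m\<^sup>2)"
    using m0 by (simp add: p_def field_simps power2_eq_square numeral_eq_Suc)
  moreover have "40 / m * (l ^ 3 / 3) = l * (40 * (p * m)) / (3 * m\<^sup>2)"
    using m0 by (simp add: p_def field_simps power2_eq_square power3_eq_cube)
  ultimately show ?thesis by simp
qed

lemma quad_form_heis_mat_gt:
  assumes n: "100 \<le> n"
  shows "\<exists>x. (4 - 40 / real n) * sum_sq n x < quad_form (heis_mat n) x"
proof -
  define L where "L = floor_sqrt n"
  have "10 \<le> L" using n by (auto simp: L_def intro: le_floor_sqrtI)
  moreover have "L\<^sup>2 \<le> n" and "n < (L + 1)\<^sup>2"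
    using Suc_floor_sqrt_power2_gt[of n] by (simp_all add: L_def)
  then have "real (L\<^sup>2) \<le> real n" and "real n < real ((L + 1)\<^sup>2)"
    by (simp_all only: of_nat_le_iff of_nat_less_iff)
  ultimately have arith: "8 * real L ^ 5 / (real n)\<^sup>2 + 4 * real L < 40 / real n * (real L ^ 3 / 3)"
    by (intro tent_ratio_arith) (simp_all add: add.commute)
  have "2 * L \<le> L\<^sup>2" using \<open>10 \<le> L\<close> by (simp add: power2_eq_square)
  then have "2 * L \<le> n" using \<open>L\<^sup>2 \<le> n\<close> by linarith
  define x where "x = tent n L"
  have "heis_potential n x \<le> 8 * real L ^ 5 / (real n)\<^sup>2"
    by (simp add: x_def heis_potential_tent_le)
  moreover have "cycle_energy n x \<le> 4 * real L"
    using n by (simp add: x_def cycle_energy_tent_le)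
  moreover have "40 / real n * (real L ^ 3 / 3) \<le> 40 / real n * sum_sq n x"
    using sum_sq_tent_ge[OF \<open>2 * L \<le> n\<close>] by (intro mult_left_mono) (simp_all add: x_def)
  ultimately have "heis_potential n x + cycle_energy n x < 40 / real n * sum_sq n x"
    using arith by linarith
  then have "(4 - 40 / real n) * sum_sq n x < quad_form (heis_mat n) x"
    using n by (simp add: quad_form_heis_mat algebra_simps)
  then show ?thesis by blast
qed

theorem lemma2p2:
  shows "\<exists>n0::nat. \<forall>n\<ge>n0. n \<ge> 3 \<longrightarrow>
           4 - 40 / real n < largest_eigenvalue (heis_mat n) \<and>
           largest_eigenvalue (heis_mat n) < 4 - 2 / real n"
proof (intro exI[of _ 100] allI impI conjI)
  fix n :: nat assume n: "100 \<le> n"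
  then obtain x where "(4 - 40 / real n) * sum_sq n x < quad_form (heis_mat n) x"
    using quad_form_heis_mat_gt by blast
  then show "4 - 40 / real n < largest_eigenvalue (heis_mat n)"
    by (rule largest_eigenvalue_gt[OF heis_mat_carrier heis_mat_symmetric])
  show "largest_eigenvalue (heis_mat n) < 4 - 2 / real n"
    using n by (intro largest_eigenvalue_lt[OF heis_mat_carrier heis_mat_symmetric]
        quad_form_heis_mat_lt) auto
qed

end
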